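(* Suppose that during gradient descent training with step size $\eta$, for some $\omega>0$ and all iterations $s=0,1,\dots,K$, $\|\mathbf{f}(s)-\mathbf{y}\|_2^2\le(1-\frac{\eta\omega}{2})^s\|\mathbf{f}(0)-\mathbf{y}\|_2^2$. Then for each $k$, $$|g_k(s)-g_k(0)|\le\frac{4\sqrt n\,\|\mathbf{f}(0)-\mathbf{y}\|_2}{\sqrt m\,\omega}\quad\text{for } s=0,1,\dots,K+1.$$
   Context: Data $(\mathbf{x}_i,y_i)\in\mathbb{R}^d\times\mathbb{R}$, $i=1,\dots,n$, with $\|\mathbf{x}_i\|_2\le1$. Network $f(\mathbf{x})=\frac{1}{\sqrt m}\sum_{k=1}^mc_k\sigma(g_k\mathbf{v}_k^\top\mathbf{x}/\|\mathbf{v}_k\|_2)$, $\sigma(s)=\max\{s,0\}$, $c_k\in\{-1,1\}$ fixed, initialized with $\mathbf{v}_k(0)\sim N(0,\alpha^2\mathbf{I})$, $g_k(0)=\|\mathbf{v}_k(0)\|_2/\alpha$. Gradient descent on $L=\frac12\sum_i(f(\mathbf{x}_i)-y_i)^2$: $\mathbf{v}_k(s+1)=\mathbf{v}_k(s)-\eta\partial L/\partial\mathbf{v}_k$, $g_k(s+1)=g_k(s)-\eta\partial L/\partial g_k$; $\mathbf{f}(s)$ predictions at iteration $s$, $\mathbf{y}$ targets. *)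

theory Defs
  imports "HOL-Analysis.Analysis"
begin

definition relu :: "real \<Rightarrow> real" where
  "relu s = max s 0"

definition relu_deriv :: "real \<Rightarrow> real" where
  "relu_deriv s = (if s > 0 then 1 else 0)"

definition net :: "nat \<Rightarrow> (nat \<Rightarrow> real) \<Rightarrow> (nat \<Rightarrow> real) \<Rightarrow> (nat \<Rightarrow> 'a::euclidean_space) \<Rightarrow> 'a \<Rightarrow> real" where
  "net m c g v x = (1 / sqrt (real m)) * (\<Sum>k<m. c k * relu (g k * (v k \<bullet> x) / norm (v k)))"

definition sqerr :: "nat \<Rightarrow> (nat \<Rightarrow> 'a::euclidean_space) \<Rightarrow> (nat \<Rightarrow> real) \<Rightarrow> nat \<Rightarrow> (nat \<Rightarrow> real) \<Rightarrow> (nat \<Rightarrow> real) \<Rightarrow> (nat \<Rightarrow> 'a) \<Rightarrow> real" where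
  "sqerr n X Y m c g v = (\<Sum>i<n. (net m c g v (X i) - Y i)^2)"

text \<open>Partial derivative of L = 1/2 sum_i (f(x_i) - y_i)^2 with respect to g_k.\<close>
definition dL_dg :: "nat \<Rightarrow> (nat \<Rightarrow> 'a::euclidean_space) \<Rightarrow> (nat \<Rightarrow> real) \<Rightarrow> nat \<Rightarrow> (nat \<Rightarrow> real) \<Rightarrow> (nat \<Rightarrow> real) \<Rightarrow> (nat \<Rightarrow> 'a) \<Rightarrow> nat \<Rightarrow> real" where
  "dL_dg n X Y m c g v k = (\<Sum>i<n. (net m c g v (X i) - Y i) * (1 / sqrt (real m)) * c k
      * relu_deriv (g k * (v k \<bullet> X i) / norm (v k)) * ((v k \<bullet> X i) / norm (v k)))"

text \<open>Gradient of L with respect to v_k.\<close>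
definition dL_dv :: "nat \<Rightarrow> (nat \<Rightarrow> 'a::euclidean_space) \<Rightarrow> (nat \<Rightarrow> real) \<Rightarrow> nat \<Rightarrow> (nat \<Rightarrow> real) \<Rightarrow> (nat \<Rightarrow> real) \<Rightarrow> (nat \<Rightarrow> 'a) \<Rightarrow> nat \<Rightarrow> 'a" where
  "dL_dv n X Y m c g v k = (\<Sum>i<n. ((net m c g v (X i) - Y i) * (1 / sqrt (real m)) * c k
      * relu_deriv (g k * (v k \<bullet> X i) / norm (v k)) * g k) *\<^sub>R
      ((1 / norm (v k)) *\<^sub>R X i - ((v k \<bullet> X i) / norm (v k) ^ 3) *\<^sub>R v k))"

end

theory Submission
  imports Defs
begin

text \<open>The update of \<open>g\<^sub>k\<close> is \<open>\<eta>\<close> times a sum over the data of residual times factors of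
  modulus at most \<open>1/\<surd>m\<close>, so by Cauchy--Schwarz it is at most
  \<open>\<eta> \<surd>n \<parallel>f(s) - y\<parallel> / \<surd>m \<le> \<eta> \<surd>n \<parallel>f(0) - y\<parallel> \<rho>\<^sup>s / \<surd>m\<close> with \<open>\<rho> = \<surd>(1 - \<eta>\<omega>/2)\<close>.
  Summing the geometric series gives the factor \<open>1/(1 - \<rho>) \<le> 2/(1 - \<rho>\<^sup>2) = 4/(\<eta>\<omega>)\<close>.
  Neither the initialization nor the update of \<open>v\<^sub>k\<close> enters the argument.\<close>

lemma sum_abs_le_sqrt_card_mult_sqrt_sum_squares:
  fixes f :: "'b \<Rightarrow> real"
  shows "(\<Sum>i\<in>A. \<bar>f i\<bar>) \<le> sqrt (real (card A)) * sqrt (\<Sum>i\<in>A. (f i)\<^sup>2)"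
  using L2_set_mult_ineq [where f = f and g = "\<lambda>_. 1" and A = A]
  by (simp add: L2_set_constant L2_set_def mult.commute)

lemma abs_inner_div_norm_le: "\<bar>(v \<bullet> x) / norm v\<bar> \<le> norm x"
  for v x :: "'a::real_inner"
proof (cases "v = 0")
  case False
  then show ?thesis
    using Cauchy_Schwarz_ineq2 [of v x] by (simp add: abs_divide divide_le_eq mult.commute)
qed simp

lemma norm_diff_le_geometric_increments:
  fixes a :: "nat \<Rightarrow> 'b::real_normed_vector"
  assumes "0 \<le> C" "0 \<le> r" "r < 1"
    and increments: "\<And>t. t < N \<Longrightarrow> norm (a (Suc t) - a t) \<le> C * r ^ t"
    and "s \<le> N"
  shows "norm (a s - a 0) \<le> C / (1 - r)"
proof -
  have "norm (a s - a 0) = norm (\<Sum>t<s. a (Suc t) - a t)"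
    by (simp add: sum_lessThan_telescope)
  also have "\<dots> \<le> (\<Sum>t<s. C * r ^ t)"
    using increments \<open>s \<le> N\<close> by (intro sum_norm_le) auto
  also have "\<dots> = C * (1 - r ^ s) / (1 - r)"
    using \<open>r < 1\<close> by (simp add: sum_distrib_left [symmetric] sum_gp_strict)
  also have "\<dots> \<le> C / (1 - r)"
    using assms(1-3) by (intro divide_right_mono mult_left_le) auto
  finally show ?thesis .
qed

lemma inverse_one_minus_sqrt_le:
  fixes q :: real
  assumes "0 \<le> q" "q < 1"
  shows "1 / (1 - sqrt q) \<le> 2 / (1 - q)"
proof -
  have "1 - q = (1 - sqrt q) * (1 + sqrt q)"
    using assms by (simp add: algebra_simps)
  also have "\<dots> \<le> (1 - sqrt q) * 2"
    using assms by (intro mult_left_mono) auto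
  finally show ?thesis
    using assms by (simp add: field_simps)
qed

lemma abs_dL_dg_le:
  assumes data: "\<And>i. i < n \<Longrightarrow> norm (X i) \<le> 1"
    and "\<bar>c k\<bar> \<le> 1"
  shows "\<bar>dL_dg n X Y m c g v k\<bar> \<le> sqrt (real n) * sqrt (sqerr n X Y m c g v) / sqrt (real m)"
proof -
  define e where "e i = net m c g v (X i) - Y i" for i
  define p where "p i = (v k \<bullet> X i) / norm (v k)" for i
  have "\<bar>dL_dg n X Y m c g v k\<bar>
      \<le> (\<Sum>i<n. \<bar>e i\<bar> / sqrt (real m) * (\<bar>c k\<bar> * \<bar>relu_deriv (g k * p i)\<bar> * \<bar>p i\<bar>))"
    unfolding dL_dg_def e_def p_def
    by (rule order_trans [OF sum_abs]) (simp add: abs_mult mult_ac)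
  also have "\<dots> \<le> (\<Sum>i<n. \<bar>e i\<bar> / sqrt (real m))"
  proof (intro sum_mono mult_right_le_one_le mult_le_one)
    fix i assume "i \<in> {..<n}"
    then show "\<bar>p i\<bar> \<le> 1"
      unfolding p_def using abs_inner_div_norm_le data order_trans by blast
  qed (use \<open>\<bar>c k\<bar> \<le> 1\<close> in \<open>auto simp: relu_deriv_def\<close>)
  also have "\<dots> \<le> sqrt (real n) * sqrt (\<Sum>i<n. (e i)\<^sup>2) / sqrt (real m)"
    using sum_abs_le_sqrt_card_mult_sqrt_sum_squares [of e "{..<n}"]
    by (simp add: sum_divide_distrib [symmetric] divide_right_mono)
  finally show ?thesis
    unfolding sqerr_def e_def .
qed

theorem lemmaC2:
  fixes X :: "nat \<Rightarrow> 'a::euclidean_space" and Y :: "nat \<Rightarrow> real"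
    and n m K :: nat and c :: "nat \<Rightarrow> real"
    and gs :: "nat \<Rightarrow> nat \<Rightarrow> real" and vs :: "nat \<Rightarrow> nat \<Rightarrow> 'a"
    and \<eta> \<omega> \<alpha> :: real
  assumes data: "\<And>i. i < n \<Longrightarrow> norm (X i) \<le> 1"
    and m_pos: "0 < m"
    and signs: "\<And>k. k < m \<Longrightarrow> c k = -1 \<or> c k = 1"
    and alpha_pos: "0 < \<alpha>"
    and init_g: "\<And>k. k < m \<Longrightarrow> gs 0 k = norm (vs 0 k) / \<alpha>"
    and step_v: "\<And>s k. k < m \<Longrightarrow>
        vs (Suc s) k = vs s k - \<eta> *\<^sub>R dL_dv n X Y m c (gs s) (vs s) k"
    and step_g: "\<And>s k. k < m \<Longrightarrow>
        gs (Suc s) k = gs s k - \<eta> * dL_dg n X Y m c (gs s) (vs s) k"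
    and eta_pos: "0 < \<eta>"
    and omega_pos: "0 < \<omega>"
    and eta_omega: "\<eta> * \<omega> \<le> 2"
    and decay: "\<And>s. s \<le> K \<Longrightarrow>
        sqerr n X Y m c (gs s) (vs s) \<le> (1 - \<eta> * \<omega> / 2) ^ s * sqerr n X Y m c (gs 0) (vs 0)"
  shows "\<forall>k<m. \<forall>s\<le>K + 1. \<bar>gs s k - gs 0 k\<bar> \<le>
           4 * sqrt (real n) * sqrt (sqerr n X Y m c (gs 0) (vs 0)) / (sqrt (real m) * \<omega>)"
proof (intro allI impI)
  fix k s assume "k < m" and "s \<le> K + 1"
  define q where "q = 1 - \<eta> * \<omega> / 2"
  define A where "A = sqrt (real n) * sqrt (sqerr n X Y m c (gs 0) (vs 0)) / sqrt (real m)"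
  have q: "0 \<le> q" "q < 1"
    using eta_omega eta_pos omega_pos by (auto simp: q_def)
  have "0 \<le> A"
    by (simp add: A_def sqerr_def sum_nonneg)
  have increments: "\<bar>gs (Suc t) k - gs t k\<bar> \<le> \<eta> * A * sqrt q ^ t" if "t < K + 1" for t
  proof -
    have "\<bar>gs (Suc t) k - gs t k\<bar> = \<eta> * \<bar>dL_dg n X Y m c (gs t) (vs t) k\<bar>"
      using step_g [OF \<open>k < m\<close>] eta_pos by (simp add: abs_mult)
    also have "\<dots> \<le> \<eta> * (sqrt (real n) * sqrt (sqerr n X Y m c (gs t) (vs t)) / sqrt (real m))"
      using abs_dL_dg_le [OF data] signs [OF \<open>k < m\<close>] eta_pos by (intro mult_left_mono) auto
    also have "\<dots> \<le> \<eta> * (sqrt (real n) * sqrt (q ^ t * sqerr n X Y m c (gs 0) (vs 0)) / sqrt (real m))"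
      using decay [of t] that eta_pos unfolding q_def
      by (intro mult_left_mono divide_right_mono real_sqrt_le_mono) auto
    also have "\<dots> = \<eta> * A * sqrt q ^ t"
      by (simp add: A_def real_sqrt_mult real_sqrt_power)
    finally show ?thesis .
  qed
  have "\<bar>gs s k - gs 0 k\<bar> \<le> \<eta> * A / (1 - sqrt q)"
    using norm_diff_le_geometric_increments [of "\<eta> * A" "sqrt q" "K + 1" "\<lambda>t. gs t k" s]
      increments \<open>0 \<le> A\<close> eta_pos q \<open>s \<le> K + 1\<close> by simp
  also have "\<dots> \<le> \<eta> * A * (2 / (1 - q))"
    using mult_left_mono [OF inverse_one_minus_sqrt_le [OF q], of "\<eta> * A"] \<open>0 \<le> A\<close> eta_pos
    by simp
  also have "\<dots> = 4 * sqrt (real n) * sqrt (sqerr n X Y m c (gs 0) (vs 0)) / (sqrt (real m) * \<omega>)"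
    using eta_pos omega_pos by (simp add: A_def q_def field_simps)
  finally show "\<bar>gs s k - gs 0 k\<bar> \<le>
      4 * sqrt (real n) * sqrt (sqerr n X Y m c (gs 0) (vs 0)) / (sqrt (real m) * \<omega>)" .
qed

end
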